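(* Let $(S,\mathfrak{n})$ be a complete Noetherian local ring with coefficient field $k$, $\Gamma$ a standard set of monomials in $k[T_1,\dots,T_r]$, and $I$ an $\mathfrak{n}$-primary ideal with a generating sequence $x_1,\dots,x_r$ which is $\Gamma$-expandable. Let $f_1,\dots,f_l\in S$ be such that their images form a $k$-basis of $S/I$. For a positive integer $t$ put $A_{1,t}=\{f_iu(x)\mid 1\le i\le l,\ u\in\Gamma,\ f_iu(x)\notin\mathfrak{n}^t\}$ and $A_{2,t}=\{f_iu(x)\mid 1\le i\le l,\ u\in\Gamma,\ \operatorname{ord}(f_i)+\sum_j\operatorname{ord}(x_j)\deg_{T_j}(u)<t\}$. Then: (1) $S/\mathfrak{n}^t$ is spanned over $k$ by the images of $A_{1,t}$; (2) $A_{1,t}\subseteq A_{2,t}$, so $S/\mathfrak{n}^t$ is spanned by the images of $A_{2,t}$; (3) if $A_{2,t}$ is $k$-linearly independent modulo $\mathfrak{n}^t$, then its image is a $k$-basis of $S/\mathfrak{n}^t$ and $\dim_kS/\mathfrak{n}^t=|A_{2,t}|$.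
   Context: $\operatorname{ord}(f)$ for $f\ne0$ is the integer $t$ with $f\in\mathfrak{n}^t\setminus\mathfrak{n}^{t+1}$ ($\infty$ for $f=0$). A standard set is a set of monomials closed under taking divisors. For $u=T_1^{a_1}\cdots T_r^{a_r}$, $u(x)=x_1^{a_1}\cdots x_r^{a_r}$. A lifting is a map $\sigma:S/I\to S$ with $\sigma(0)=0$ and $\pi\circ\sigma=\mathrm{id}_{S/I}$. $x_1,\dots,x_r$ is $\Gamma$-expandable if for every lifting $\sigma$ every $f\in S$ has a unique representation $f=\sum_{u\in\Gamma}f_uu(x)$ (convergent sum) with all $f_u\in\sigma(S/I)$. *)

theory Defs
  imports Main "HOL-Library.Extended_Nat"
begin

definition is_ideal :: "'a::comm_ring_1 set \<Rightarrow> bool" where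
  "is_ideal J \<longleftrightarrow> 0 \<in> J \<and> (\<forall>a\<in>J. \<forall>b\<in>J. a + b \<in> J) \<and> (\<forall>a\<in>J. \<forall>s. s * a \<in> J)"

definition gen_ideal :: "'a::comm_ring_1 set \<Rightarrow> 'a set" where
  "gen_ideal G = {(\<Sum>i<m. c i * g i) | (m::nat) c g. \<forall>i<m. g i \<in> G}"

fun ideal_pow :: "'a::comm_ring_1 set \<Rightarrow> nat \<Rightarrow> 'a set" where
  "ideal_pow N 0 = UNIV"
| "ideal_pow N (Suc t) = gen_ideal {a * b | a b. a \<in> ideal_pow N t \<and> b \<in> N}"

definition noetherian_ring :: "'a::comm_ring_1 itself \<Rightarrow> bool" where
  "noetherian_ring _ \<longleftrightarrow> (\<forall>J::'a set. is_ideal J \<longrightarrow> (\<exists>G. finite G \<and> J = gen_ideal G))"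

definition local_ring_max :: "'a::comm_ring_1 set \<Rightarrow> bool" where
  "local_ring_max N \<longleftrightarrow> is_ideal N \<and> N \<noteq> UNIV \<and>
     (\<forall>J. is_ideal J \<and> J \<noteq> UNIV \<longrightarrow> J \<subseteq> N)"

definition adic_cauchy :: "'a::comm_ring_1 set \<Rightarrow> (nat \<Rightarrow> 'a) \<Rightarrow> bool" where
  "adic_cauchy N a \<longleftrightarrow> (\<forall>t. \<exists>M. \<forall>m\<ge>M. \<forall>p\<ge>M. a m - a p \<in> ideal_pow N t)"

definition adic_limit :: "'a::comm_ring_1 set \<Rightarrow> (nat \<Rightarrow> 'a) \<Rightarrow> 'a \<Rightarrow> bool" where
  "adic_limit N a L \<longleftrightarrow> (\<forall>t. \<exists>M. \<forall>m\<ge>M. a m - L \<in> ideal_pow N t)"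

definition adic_complete :: "'a::comm_ring_1 set \<Rightarrow> bool" where
  "adic_complete N \<longleftrightarrow> (\<forall>a. adic_cauchy N a \<longrightarrow> (\<exists>L. adic_limit N a L))"

definition complete_noetherian_local :: "'a::comm_ring_1 set \<Rightarrow> bool" where
  "complete_noetherian_local N \<longleftrightarrow>
     noetherian_ring TYPE('a) \<and> local_ring_max N \<and> adic_complete N"

(* K is a coefficient field: a subfield of S mapping bijectively onto S/N *)
definition coefficient_field :: "'a::comm_ring_1 set \<Rightarrow> 'a set \<Rightarrow> bool" where
  "coefficient_field N K \<longleftrightarrow>
     0 \<in> K \<and> 1 \<in> K \<and> (\<forall>a\<in>K. \<forall>b\<in>K. a + b \<in> K \<and> a - b \<in> K \<and> a * b \<in> K) \<and>
     (\<forall>a\<in>K. a \<noteq> 0 \<longrightarrow> (\<exists>b\<in>K. a * b = 1)) \<and>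
     (\<forall>s. \<exists>!c. c \<in> K \<and> s - c \<in> N)"

definition radical :: "'a::comm_ring_1 set \<Rightarrow> 'a set" where
  "radical J = {a. \<exists>m. a ^ m \<in> J}"

definition primary_ideal :: "'a::comm_ring_1 set \<Rightarrow> bool" where
  "primary_ideal J \<longleftrightarrow> is_ideal J \<and> J \<noteq> UNIV \<and>
     (\<forall>a b. a * b \<in> J \<and> a \<notin> J \<longrightarrow> (\<exists>m. b ^ m \<in> J))"

definition primary_to :: "'a::comm_ring_1 set \<Rightarrow> 'a set \<Rightarrow> bool" where
  "primary_to N J \<longleftrightarrow> primary_ideal J \<and> radical J = N"

(* Monomials in T_0,...,T_{r-1} as exponent vectors u :: nat => nat with u j = 0 for j >= r *)
definition monomials :: "nat \<Rightarrow> (nat \<Rightarrow> nat) set" where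
  "monomials r = {u. \<forall>j\<ge>r. u j = 0}"

definition standard_set :: "nat \<Rightarrow> (nat \<Rightarrow> nat) set \<Rightarrow> bool" where
  "standard_set r \<Gamma> \<longleftrightarrow> \<Gamma> \<subseteq> monomials r \<and>
     (\<forall>u\<in>\<Gamma>. \<forall>v. (\<forall>j. v j \<le> u j) \<longrightarrow> v \<in> \<Gamma>)"

definition mono_eval :: "nat \<Rightarrow> (nat \<Rightarrow> 'a::comm_ring_1) \<Rightarrow> (nat \<Rightarrow> nat) \<Rightarrow> 'a" where
  "mono_eval r x u = (\<Prod>j<r. x j ^ u j)"

(* lifting sigma : S/I -> S, represented as a map S -> S constant on cosets of I *)
definition lifting :: "'a::comm_ring_1 set \<Rightarrow> ('a \<Rightarrow> 'a) \<Rightarrow> bool" where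
  "lifting I \<sigma> \<longleftrightarrow> (\<forall>a b. a - b \<in> I \<longrightarrow> \<sigma> a = \<sigma> b) \<and> (\<forall>a. \<sigma> a - a \<in> I) \<and> \<sigma> 0 = 0"

(* N-adically convergent (unordered) sum  f = sum_{u in Gamma} g u * u(x) *)
definition adic_sums :: "'a::comm_ring_1 set \<Rightarrow> nat \<Rightarrow> (nat \<Rightarrow> 'a) \<Rightarrow> (nat \<Rightarrow> nat) set
                          \<Rightarrow> ((nat \<Rightarrow> nat) \<Rightarrow> 'a) \<Rightarrow> 'a \<Rightarrow> bool" where
  "adic_sums N r x \<Gamma> g f \<longleftrightarrow>
     (\<forall>t. \<exists>F0. finite F0 \<and> F0 \<subseteq> \<Gamma> \<and>
        (\<forall>F. finite F \<and> F0 \<subseteq> F \<and> F \<subseteq> \<Gamma> \<longrightarrow>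
              f - (\<Sum>u\<in>F. g u * mono_eval r x u) \<in> ideal_pow N t))"

definition expandable :: "'a::comm_ring_1 set \<Rightarrow> 'a set \<Rightarrow> nat \<Rightarrow> (nat \<Rightarrow> 'a)
                          \<Rightarrow> (nat \<Rightarrow> nat) set \<Rightarrow> bool" where
  "expandable N I r x \<Gamma> \<longleftrightarrow>
     (\<forall>\<sigma>. lifting I \<sigma> \<longrightarrow> (\<forall>f.
        (\<exists>g. (\<forall>u\<in>\<Gamma>. g u \<in> range \<sigma>) \<and> adic_sums N r x \<Gamma> g f) \<and>
        (\<forall>g h. (\<forall>u\<in>\<Gamma>. g u \<in> range \<sigma>) \<and> adic_sums N r x \<Gamma> g f \<and>
               (\<forall>u\<in>\<Gamma>. h u \<in> range \<sigma>) \<and> adic_sums N r x \<Gamma> h f \<longrightarrow>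
               (\<forall>u\<in>\<Gamma>. g u = h u))))"

definition ord :: "'a::comm_ring_1 set \<Rightarrow> 'a \<Rightarrow> enat" where
  "ord N f = (if (\<forall>t. f \<in> ideal_pow N t) then \<infinity> else enat (GREATEST t. f \<in> ideal_pow N t))"

definition spans_mod :: "'a::comm_ring_1 set \<Rightarrow> 'a set \<Rightarrow> 'a set \<Rightarrow> bool" where
  "spans_mod K J A \<longleftrightarrow> (\<forall>s. \<exists>F c. finite F \<and> F \<subseteq> A \<and> (\<forall>a\<in>F. c a \<in> K) \<and>
                              s - (\<Sum>a\<in>F. c a * a) \<in> J)"

definition indep_mod :: "'a::comm_ring_1 set \<Rightarrow> 'a set \<Rightarrow> 'a set \<Rightarrow> bool" where
  "indep_mod K J A \<longleftrightarrow> (\<forall>F c. finite F \<and> F \<subseteq> A \<and> (\<forall>a\<in>F. c a \<in> K) \<and>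
                              (\<Sum>a\<in>F. c a * a) \<in> J \<longrightarrow> (\<forall>a\<in>F. c a = 0))"

definition kdim :: "'a::comm_ring_1 set \<Rightarrow> 'a set \<Rightarrow> nat" where
  "kdim K J = (LEAST m. \<exists>B. finite B \<and> card B = m \<and> spans_mod K J B)"

definition family_basis_mod :: "'a::comm_ring_1 set \<Rightarrow> 'a set \<Rightarrow> nat \<Rightarrow> (nat \<Rightarrow> 'a) \<Rightarrow> bool" where
  "family_basis_mod K I l f \<longleftrightarrow>
     (\<forall>s. \<exists>c. (\<forall>i<l. c i \<in> K) \<and> s - (\<Sum>i<l. c i * f i) \<in> I) \<and>
     (\<forall>c. (\<forall>i<l. c i \<in> K) \<and> (\<Sum>i<l. c i * f i) \<in> I \<longrightarrow> (\<forall>i<l. c i = 0))"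

definition A1 :: "'a::comm_ring_1 set \<Rightarrow> nat \<Rightarrow> (nat \<Rightarrow> 'a) \<Rightarrow> (nat \<Rightarrow> nat) set
                  \<Rightarrow> nat \<Rightarrow> (nat \<Rightarrow> 'a) \<Rightarrow> nat \<Rightarrow> 'a set" where
  "A1 N r x \<Gamma> l f t = {f i * mono_eval r x u | i u. i < l \<and> u \<in> \<Gamma> \<and>
                          f i * mono_eval r x u \<notin> ideal_pow N t}"

definition A2 :: "'a::comm_ring_1 set \<Rightarrow> nat \<Rightarrow> (nat \<Rightarrow> 'a) \<Rightarrow> (nat \<Rightarrow> nat) set
                  \<Rightarrow> nat \<Rightarrow> (nat \<Rightarrow> 'a) \<Rightarrow> nat \<Rightarrow> 'a set" where
  "A2 N r x \<Gamma> l f t = {f i * mono_eval r x u | i u. i < l \<and> u \<in> \<Gamma> \<and>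
                          ord N (f i) + (\<Sum>j<r. ord N (x j) * enat (u j)) < enat t}"

end

theory Submission
  imports Defs
begin

text \<open>Expanding an element of S along \<Gamma>, with coefficients taken in a lifting
whose image is the k-span of f_1, ..., f_l, and truncating modulo n^t writes it as a
k-combination of the products f_i u(x); products lying in n^t can be dropped, which
gives (1). The order function is superadditive, so f_i u(x) \<notin> n^t forces
ord(f_i) + \<Sigma>_j ord(x_j) deg_j(u) < t, which gives (2). As every x_j lies in n,
this bounds the exponents of u, so A_2,t is finite; by the Steinitz exchange
argument an independent set is no larger than any finite spanning set, so a finite
independent spanning set realises the minimum defining the dimension, which gives (3).\<close>

lemma is_ideal_zero: "is_ideal J \<Longrightarrow> 0 \<in> J"
  unfolding is_ideal_def by blast

lemma is_ideal_add: "is_ideal J \<Longrightarrow> a \<in> J \<Longrightarrow> b \<in> J \<Longrightarrow> a + b \<in> J"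
  unfolding is_ideal_def by blast

lemma is_ideal_mult_left: "is_ideal J \<Longrightarrow> a \<in> J \<Longrightarrow> s * a \<in> J"
  unfolding is_ideal_def by blast

lemma is_ideal_mult_right: "is_ideal J \<Longrightarrow> a \<in> J \<Longrightarrow> a * s \<in> J"
  unfolding is_ideal_def by (metis mult.commute)

lemma is_ideal_uminus: "is_ideal J \<Longrightarrow> a \<in> J \<Longrightarrow> - a \<in> J"
  by (metis is_ideal_mult_left mult_minus1)

lemma is_ideal_diff: "is_ideal J \<Longrightarrow> a \<in> J \<Longrightarrow> b \<in> J \<Longrightarrow> a - b \<in> J"
  by (metis is_ideal_add is_ideal_uminus diff_conv_add_uminus)

lemma is_ideal_sum: "is_ideal J \<Longrightarrow> (\<And>i. i \<in> X \<Longrightarrow> h i \<in> J) \<Longrightarrow> sum h X \<in> J"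
  by (induction X rule: infinite_finite_induct) (auto intro: is_ideal_zero is_ideal_add)

lemma gen_ideal_iff:
  "b \<in> gen_ideal G \<longleftrightarrow> (\<exists>(m::nat) c g. b = (\<Sum>i<m. c i * g i) \<and> (\<forall>i<m. g i \<in> G))"
  by (simp add: gen_ideal_def)

lemma is_ideal_gen_ideal: "is_ideal (gen_ideal G)"
  unfolding is_ideal_def
proof (intro conjI ballI allI)
  show "0 \<in> gen_ideal G"
    unfolding gen_ideal_iff by (rule exI[of _ 0]) simp
next
  fix a b assume "a \<in> gen_ideal G" "b \<in> gen_ideal G"
  then obtain m1 m2 :: nat and c1 g1 c2 g2 where
    a: "a = (\<Sum>i<m1. c1 i * g1 i)" "\<forall>i<m1. g1 i \<in> G" and
    b: "b = (\<Sum>i<m2. c2 i * g2 i)" "\<forall>i<m2. g2 i \<in> G"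
    unfolding gen_ideal_iff by blast
  define c where "c i = (if i < m1 then c1 i else c2 (i - m1))" for i
  define g where "g i = (if i < m1 then g1 i else g2 (i - m1))" for i
  have "(\<Sum>i<m1 + m2. c i * g i) = (\<Sum>i<m1. c i * g i) + (\<Sum>i<m2. c (m1 + i) * g (m1 + i))"
    by (induction m2) (simp_all add: add.assoc)
  also have "\<dots> = a + b"
    using a b by (simp add: c_def g_def)
  moreover have "\<forall>i<m1 + m2. g i \<in> G"
    using a b by (simp add: g_def)
  ultimately show "a + b \<in> gen_ideal G"
    unfolding gen_ideal_iff by (metis (no_types))
next
  fix a s assume "a \<in> gen_ideal G"
  then obtain m :: nat and c g where a: "a = (\<Sum>i<m. c i * g i)" "\<forall>i<m. g i \<in> G"
    unfolding gen_ideal_iff by blast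
  have "s * a = (\<Sum>i<m. (s * c i) * g i)"
    using a by (simp add: sum_distrib_left mult.assoc)
  then show "s * a \<in> gen_ideal G"
    unfolding gen_ideal_iff using a(2) by (metis (no_types))
qed

lemma gen_ideal_base: "g \<in> G \<Longrightarrow> g \<in> gen_ideal G"
  unfolding gen_ideal_iff by (intro exI[of _ 1] exI[of _ "\<lambda>_. 1"] exI[of _ "\<lambda>_. g"]) simp

lemma gen_ideal_least: "is_ideal J \<Longrightarrow> G \<subseteq> J \<Longrightarrow> gen_ideal G \<subseteq> J"
  unfolding gen_ideal_def by (auto intro!: is_ideal_sum is_ideal_mult_left)

lemma is_ideal_ideal_pow: "is_ideal (ideal_pow N t)"
  by (cases t) (simp_all only: ideal_pow.simps is_ideal_gen_ideal, simp add: is_ideal_def)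

lemma is_ideal_preimage_mult: "is_ideal J \<Longrightarrow> is_ideal {b. a * b \<in> J}"
  unfolding is_ideal_def by (simp add: distrib_left mult.left_commute)

lemma ideal_pow_Suc_subset: "ideal_pow N (Suc t) \<subseteq> ideal_pow N t"
  unfolding ideal_pow.simps
  by (rule gen_ideal_least[OF is_ideal_ideal_pow])
    (auto intro: is_ideal_mult_right[OF is_ideal_ideal_pow])

lemma ideal_pow_antimono: "p \<le> q \<Longrightarrow> ideal_pow N q \<subseteq> ideal_pow N p"
  by (induction q rule: dec_induct) (use ideal_pow_Suc_subset in blast)+

lemma ideal_pow_mult:
  "a \<in> ideal_pow N p \<Longrightarrow> b \<in> ideal_pow N q \<Longrightarrow> a * b \<in> ideal_pow N (p + q)"
proof (induction q arbitrary: b)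
  case 0
  then show ?case by (simp add: is_ideal_mult_right is_ideal_ideal_pow)
next
  case (Suc q)
  have "ideal_pow N (Suc q) \<subseteq>
      {b. a * b \<in> gen_ideal {u * v |u v. u \<in> ideal_pow N (p + q) \<and> v \<in> N}}"
    unfolding ideal_pow.simps
  proof (rule gen_ideal_least)
    show "is_ideal {b. a * b \<in> gen_ideal {u * v |u v. u \<in> ideal_pow N (p + q) \<and> v \<in> N}}"
      by (rule is_ideal_preimage_mult[OF is_ideal_gen_ideal])
    show "{u * v |u v. u \<in> ideal_pow N q \<and> v \<in> N}
          \<subseteq> {b. a * b \<in> gen_ideal {u * v |u v. u \<in> ideal_pow N (p + q) \<and> v \<in> N}}"
      using Suc.IH Suc.prems(1) by (force simp: mult.assoc[symmetric] intro: gen_ideal_base)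
  qed
  then show ?case using Suc.prems(2) by auto
qed

lemma subset_ideal_pow_1: "N \<subseteq> ideal_pow N 1"
proof
  fix v assume "v \<in> N"
  then have "v \<in> {u * v |u v. u \<in> ideal_pow N 0 \<and> v \<in> N}"
    by (metis (mono_tags, lifting) UNIV_I ideal_pow.simps(1) mem_Collect_eq mult_1)
  then show "v \<in> ideal_pow N 1"
    by (simp add: gen_ideal_base)
qed

lemma primary_to_subset: "primary_to N J \<Longrightarrow> J \<subseteq> N"
  unfolding primary_to_def radical_def by (metis mem_Collect_eq power_one_right subsetI)

lemma enat_le_ord_iff: "enat p \<le> ord N a \<longleftrightarrow> a \<in> ideal_pow N p"
proof (cases "\<forall>t. a \<in> ideal_pow N t")
  case False
  then obtain t0 where "a \<notin> ideal_pow N t0" by blast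
  then have bound: "\<forall>t. a \<in> ideal_pow N t \<longrightarrow> t \<le> t0"
    using ideal_pow_antimono[of t0 _ N] by (meson nat_le_linear subsetD)
  define m where "m = (GREATEST t. a \<in> ideal_pow N t)"
  have "a \<in> ideal_pow N m"
    unfolding m_def by (rule GreatestI_nat[of _ 0]) (use bound in auto)
  moreover have "a \<in> ideal_pow N p \<Longrightarrow> p \<le> m"
    unfolding m_def by (rule Greatest_le_nat) (use bound in auto)
  ultimately have "a \<in> ideal_pow N p \<longleftrightarrow> p \<le> m"
    using ideal_pow_antimono by blast
  then show ?thesis
    unfolding ord_def m_def using False by (simp del: not_all)
qed (simp add: ord_def)

lemma enat_le_by_nat:
  assumes "\<And>p. enat p \<le> x \<Longrightarrow> enat p \<le> y"
  shows "x \<le> (y::enat)"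
proof (cases x)
  case (enat m)
  then show ?thesis using assms[of m] by simp
next
  case infinity
  show ?thesis
  proof (cases y)
    case (enat n)
    then show ?thesis using assms[of "Suc n"] infinity by simp
  qed simp
qed

lemma ord_mult_ge: "ord N a + ord N b \<le> ord N (a * b)"
proof (rule enat_le_by_nat)
  fix p assume p: "enat p \<le> ord N a + ord N b"
  show "enat p \<le> ord N (a * b)"
  proof (cases "ord N a = \<infinity> \<or> ord N b = \<infinity>")
    case True
    then have "a \<in> ideal_pow N p \<or> b \<in> ideal_pow N p"
      by (metis enat_le_ord_iff enat_ord_code(3))
    then show ?thesis
      by (auto simp: enat_le_ord_iff intro: is_ideal_mult_left is_ideal_mult_right is_ideal_ideal_pow)
  next
    case False
    then obtain m k where mk: "ord N a = enat m" "ord N b = enat k" by auto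
    then have "a * b \<in> ideal_pow N (m + k)"
      by (metis enat_le_ord_iff ideal_pow_mult order_refl)
    moreover have "p \<le> m + k" using p mk by simp
    ultimately show ?thesis using ideal_pow_antimono enat_le_ord_iff by blast
  qed
qed

lemma ord_power_ge: "ord N a * enat n \<le> ord N (a ^ n)"
proof (induction n)
  case 0
  then show ?case by (simp add: enat_0)
next
  case (Suc n)
  have "ord N a * enat (Suc n) = ord N a + ord N a * enat n"
  proof -
    have "enat (Suc n) = 1 + enat n" by (simp add: one_enat_def)
    then show ?thesis by (simp add: distrib_left)
  qed
  also have "\<dots> \<le> ord N a + ord N (a ^ n)" using Suc by (rule add_left_mono)
  also have "\<dots> \<le> ord N (a ^ Suc n)" by (metis ord_mult_ge power_Suc)
  finally show ?case .
qed

lemma ord_mono_eval_ge: "(\<Sum>j<r. ord N (x j) * enat (u j)) \<le> ord N (mono_eval r x u)"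
proof (induction r)
  case 0
  then show ?case by (simp add: mono_eval_def)
next
  case (Suc r)
  have "(\<Sum>j<Suc r. ord N (x j) * enat (u j))
        = (\<Sum>j<r. ord N (x j) * enat (u j)) + ord N (x r) * enat (u r)"
    by simp
  also have "\<dots> \<le> ord N (mono_eval r x u) + ord N (x r ^ u r)"
    using Suc ord_power_ge by (rule add_mono)
  also have "\<dots> \<le> ord N (mono_eval (Suc r) x u)"
    using ord_mult_ge by (simp add: mono_eval_def)
  finally show ?case .
qed

lemma coefficient_field_zero: "coefficient_field N K \<Longrightarrow> 0 \<in> K"
  and coefficient_field_one: "coefficient_field N K \<Longrightarrow> 1 \<in> K"
  and coefficient_field_diff: "coefficient_field N K \<Longrightarrow> a \<in> K \<Longrightarrow> b \<in> K \<Longrightarrow> a - b \<in> K"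
  and coefficient_field_mult: "coefficient_field N K \<Longrightarrow> a \<in> K \<Longrightarrow> b \<in> K \<Longrightarrow> a * b \<in> K"
  and coefficient_field_inverse:
    "coefficient_field N K \<Longrightarrow> a \<in> K \<Longrightarrow> a \<noteq> 0 \<Longrightarrow> \<exists>b\<in>K. a * b = 1"
  unfolding coefficient_field_def by blast+

lemma coefficient_field_uminus: "coefficient_field N K \<Longrightarrow> a \<in> K \<Longrightarrow> - a \<in> K"
  by (metis coefficient_field_diff coefficient_field_zero diff_0)

lemma coefficient_field_sum:
  "coefficient_field N K \<Longrightarrow> (\<And>i. i \<in> X \<Longrightarrow> h i \<in> K) \<Longrightarrow> sum h X \<in> K"
  unfolding coefficient_field_def by (induction X rule: infinite_finite_induct) auto

definition in_span_mod :: "'a::comm_ring_1 set \<Rightarrow> 'a set \<Rightarrow> 'a set \<Rightarrow> 'a \<Rightarrow> bool" where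
  "in_span_mod K J A s \<longleftrightarrow>
     (\<exists>F c. finite F \<and> F \<subseteq> A \<and> (\<forall>a\<in>F. c a \<in> K) \<and> s - (\<Sum>a\<in>F. c a * a) \<in> J)"

lemma spans_mod_iff_in_span_mod: "spans_mod K J A \<longleftrightarrow> (\<forall>s. in_span_mod K J A s)"
  by (simp add: spans_mod_def in_span_mod_def)

lemma spans_mod_mono: "spans_mod K J A \<Longrightarrow> A \<subseteq> B \<Longrightarrow> spans_mod K J B"
  unfolding spans_mod_def by (meson order_trans)

lemma in_span_mod_finite_coords:
  assumes K: "coefficient_field N K" and B: "finite B" and s: "in_span_mod K J B s"
  shows "\<exists>d. (\<forall>b\<in>B. d b \<in> K) \<and> s - (\<Sum>b\<in>B. d b * b) \<in> J"
proof -
  obtain F c where F: "finite F" "F \<subseteq> B" "\<forall>a\<in>F. c a \<in> K" "s - (\<Sum>a\<in>F. c a * a) \<in> J"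
    using s unfolding in_span_mod_def by blast
  define d where "d b = (if b \<in> F then c b else 0)" for b
  have "(\<Sum>b\<in>B. d b * b) = (\<Sum>b\<in>F. d b * b)"
    using B F(2) by (intro sum.mono_neutral_right) (auto simp: d_def)
  also have "\<dots> = (\<Sum>a\<in>F. c a * a)"
    by (simp add: d_def)
  finally have "(\<Sum>b\<in>B. d b * b) = (\<Sum>a\<in>F. c a * a)" .
  moreover have "\<forall>b\<in>B. d b \<in> K"
    using F(3) coefficient_field_zero[OF K] by (simp add: d_def)
  ultimately show ?thesis using F(4) by metis
qed

lemma in_span_mod_discard_ideal_terms:
  fixes J K :: "'a::comm_ring_1 set"
  assumes J: "is_ideal J" and K: "coefficient_field N K" and X: "finite X"
    and CK: "\<And>p. p \<in> X \<Longrightarrow> C p \<in> K"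
    and PA: "\<And>p. p \<in> X \<Longrightarrow> P p \<in> A \<or> P p \<in> J"
    and s: "s - (\<Sum>p\<in>X. C p * P p) \<in> J"
  shows "in_span_mod K J A s"
proof -
  define Y where "Y = P ` X"
  define c where "c a = (\<Sum>p\<in>{p \<in> X. P p = a}. C p)" for a
  have finY: "finite Y" using X by (simp add: Y_def)
  have "(\<Sum>p\<in>X. C p * P p) = (\<Sum>a\<in>Y. \<Sum>p\<in>{p \<in> X. P p = a}. C p * P p)"
    unfolding Y_def by (rule sum.image_gen[OF X])
  also have "\<dots> = (\<Sum>a\<in>Y. c a * a)"
    unfolding c_def sum_distrib_right by (intro sum.cong) auto
  also have "\<dots> = (\<Sum>a\<in>Y \<inter> A. c a * a) + (\<Sum>a\<in>Y - A. c a * a)"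
    using finY by (metis sum.Int_Diff)
  finally have eq: "s - (\<Sum>a\<in>Y \<inter> A. c a * a)
      = (s - (\<Sum>p\<in>X. C p * P p)) + (\<Sum>a\<in>Y - A. c a * a)"
    by simp
  have "(\<Sum>a\<in>Y - A. c a * a) \<in> J"
    using PA by (auto simp: Y_def intro!: is_ideal_sum[OF J] is_ideal_mult_left[OF J])
  then have "s - (\<Sum>a\<in>Y \<inter> A. c a * a) \<in> J"
    unfolding eq by (rule is_ideal_add[OF J s])
  moreover have "\<forall>a\<in>Y \<inter> A. c a \<in> K"
    using CK by (auto simp: c_def intro!: coefficient_field_sum[OF K])
  ultimately show ?thesis
    unfolding in_span_mod_def using finY by blast
qed

lemma indep_modD:
  "indep_mod K J A \<Longrightarrow> finite F \<Longrightarrow> F \<subseteq> A \<Longrightarrow> (\<And>a. a \<in> F \<Longrightarrow> c a \<in> K) \<Longrightarrow>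
    (\<Sum>a\<in>F. c a * a) \<in> J \<Longrightarrow> a \<in> F \<Longrightarrow> c a = 0"
  unfolding indep_mod_def by blast

lemma indep_mod_shear:
  fixes K J :: "'a::comm_ring_1 set"
  assumes K: "coefficient_field N K" and J: "is_ideal J" and one: "(1::'a) \<noteq> 0"
    and indA: "indep_mod K J A" and a0: "a0 \<in> A" and \<gamma>K: "\<And>a. a \<in> A \<Longrightarrow> \<gamma> a \<in> K"
  defines "\<phi> \<equiv> \<lambda>a. a - \<gamma> a * a0"
  shows "inj_on \<phi> (A - {a0})" and "indep_mod K J (\<phi> ` (A - {a0}))"
proof -
  show inj: "inj_on \<phi> (A - {a0})"
  proof (rule inj_onI, rule ccontr)
    fix a1 a2 assume a1: "a1 \<in> A - {a0}" and a2: "a2 \<in> A - {a0}" and "\<phi> a1 = \<phi> a2" "a1 \<noteq> a2"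
    define C where "C a = (if a = a1 then 1 else if a = a2 then -1 else \<gamma> a2 - \<gamma> a1)" for a
    have ne: "a0 \<noteq> a1" "a0 \<noteq> a2" "a1 \<noteq> a2"
      using a1 a2 \<open>a1 \<noteq> a2\<close> by auto
    have "(\<Sum>a\<in>{a0, a1, a2}. C a * a) = C a0 * a0 + C a1 * a1 + C a2 * a2"
      using ne by (simp add: add.assoc)
    also have "\<dots> = \<phi> a1 - \<phi> a2"
      using ne by (simp add: C_def \<phi>_def algebra_simps)
    finally have "(\<Sum>a\<in>{a0, a1, a2}. C a * a) = \<phi> a1 - \<phi> a2" .
    then have "(\<Sum>a\<in>{a0, a1, a2}. C a * a) \<in> J"
      using \<open>\<phi> a1 = \<phi> a2\<close> is_ideal_zero[OF J] by simp
    then have "C a1 = 0"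
      by (rule indep_modD[OF indA, rotated 3])
        (use a0 a1 a2 in \<open>auto simp: C_def intro: coefficient_field_one[OF K]
           coefficient_field_uminus[OF K] coefficient_field_diff[OF K] \<gamma>K\<close>)
    then show False using one by (simp add: C_def)
  qed
  show "indep_mod K J (\<phi> ` (A - {a0}))"
    unfolding indep_mod_def
  proof (intro allI impI ballI)
    fix F c a'
    assume Fc: "finite F \<and> F \<subseteq> \<phi> ` (A - {a0}) \<and> (\<forall>a\<in>F. c a \<in> K) \<and> (\<Sum>a\<in>F. c a * a) \<in> J"
      and "a' \<in> F"
    define G where "G = {a \<in> A - {a0}. \<phi> a \<in> F}"
    have FG: "F = \<phi> ` G" using Fc by (auto simp: G_def)
    have injG: "inj_on \<phi> G" using inj by (rule inj_on_subset) (auto simp: G_def)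
    have finG: "finite G" using Fc FG injG finite_imageD by blast
    define C where "C a = (if a = a0 then - (\<Sum>x\<in>G. c (\<phi> x) * \<gamma> x) else c (\<phi> a))" for a
    have "(\<Sum>a\<in>F. c a * a) = (\<Sum>x\<in>G. c (\<phi> x) * x) - (\<Sum>x\<in>G. c (\<phi> x) * \<gamma> x) * a0"
      unfolding FG sum.reindex[OF injG]
      by (simp add: \<phi>_def algebra_simps sum_subtractf sum_distrib_left)
    also have "\<dots> = (\<Sum>x\<in>insert a0 G. C x * x)"
    proof -
      have "a0 \<notin> G" by (simp add: G_def)
      moreover from this have "(\<Sum>x\<in>G. C x * x) = (\<Sum>x\<in>G. c (\<phi> x) * x)"
        by (intro sum.cong) (auto simp: C_def)
      ultimately show ?thesis using finG by (simp add: C_def)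
    qed
    finally have "(\<Sum>x\<in>insert a0 G. C x * x) \<in> J" using Fc by simp
    moreover obtain g where g: "g \<in> G" "a' = \<phi> g" using \<open>a' \<in> F\<close> FG by blast
    moreover have "C x \<in> K" if "x \<in> insert a0 G" for x
      using that Fc \<gamma>K by (auto simp: C_def G_def intro!: coefficient_field_uminus[OF K]
          coefficient_field_sum[OF K] coefficient_field_mult[OF K])
    ultimately have "C g = 0"
      using indep_modD[OF indA, of "insert a0 G" C g] finG a0 by (auto simp: G_def)
    then show "c a' = 0" using g by (simp add: C_def G_def)
  qed
qed

lemma congruence_eliminate_coordinate:
  fixes J :: "'a::comm_ring_1 set"
  assumes J: "is_ideal J"
    and a: "a - (d b * b + (\<Sum>b'\<in>B. d b' * b')) \<in> J"
    and a0: "a0 - (d0 b * b + (\<Sum>b'\<in>B. d0 b' * b')) \<in> J"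
    and \<gamma>: "\<gamma> * d0 b = d b"
  shows "(a - \<gamma> * a0) - (\<Sum>b'\<in>B. (d b' - \<gamma> * d0 b') * b') \<in> J"
proof -
  have "(a - \<gamma> * a0) - (\<Sum>b'\<in>B. (d b' - \<gamma> * d0 b') * b')
      = (a - (d b * b + (\<Sum>b'\<in>B. d b' * b')))
        - \<gamma> * (a0 - (d0 b * b + (\<Sum>b'\<in>B. d0 b' * b')))
        + (d b - \<gamma> * d0 b) * b"
    by (simp add: algebra_simps sum_subtractf sum_distrib_left)
  also have "\<dots> \<in> J"
    using a a0 \<gamma> by (simp add: is_ideal_diff[OF J] is_ideal_mult_left[OF J])
  finally show ?thesis .
qed

text \<open>Steinitz exchange: eliminating a basis vector b of the spanning set by
shearing A along an element a0 whose b-coordinate is invertible.\<close>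

lemma indep_mod_card_le_spanning:
  fixes K J :: "'a::comm_ring_1 set"
  assumes K: "coefficient_field N K" and J: "is_ideal J" and one: "(1::'a) \<noteq> 0"
  shows "finite B \<Longrightarrow> finite A \<Longrightarrow> indep_mod K J A \<Longrightarrow>
    (\<And>a. a \<in> A \<Longrightarrow> \<exists>d. (\<forall>b\<in>B. d b \<in> K) \<and> a - (\<Sum>b\<in>B. d b * b) \<in> J) \<Longrightarrow>
    card A \<le> card B"
proof (induction B arbitrary: A rule: finite_induct)
  case empty
  have "A = {}"
  proof (rule ccontr)
    assume "A \<noteq> {}"
    then obtain a where a: "a \<in> A" by blast
    then have "(\<Sum>a'\<in>{a}. 1 * a') \<in> J" using empty.prems(3) by auto
    then have "(1::'a) = 0"
      by (rule indep_modD[OF empty.prems(2), rotated 3]) (use a coefficient_field_one[OF K] in auto)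
    then show False using one by simp
  qed
  then show ?case by simp
next
  case (insert b B)
  obtain d where d: "\<And>a. a \<in> A \<Longrightarrow> (\<forall>b'\<in>insert b B. d a b' \<in> K)
      \<and> a - (d a b * b + (\<Sum>b'\<in>B. d a b' * b')) \<in> J"
    using insert.prems(3) insert.hyps by simp metis
  show ?case
  proof (cases "\<forall>a\<in>A. d a b = 0")
    case True
    have "\<exists>e. (\<forall>b'\<in>B. e b' \<in> K) \<and> a - (\<Sum>b'\<in>B. e b' * b') \<in> J" if "a \<in> A" for a
      using d[OF that] True that by auto
    then have "card A \<le> card B"
      by (rule insert.IH[OF insert.prems(1,2)])
    then show ?thesis using insert.hyps by simp
  next
    case False
    then obtain a0 where a0: "a0 \<in> A" "d a0 b \<noteq> 0" by blast
    then obtain \<beta> where \<beta>: "\<beta> \<in> K" "d a0 b * \<beta> = 1"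
      using d coefficient_field_inverse[OF K] by blast
    define \<gamma> where "\<gamma> a = d a b * \<beta>" for a
    define \<phi> where "\<phi> a = a - \<gamma> a * a0" for a
    have \<gamma>K: "\<gamma> a \<in> K" if "a \<in> A" for a
      using d[OF that] \<beta> by (simp add: \<gamma>_def coefficient_field_mult[OF K])
    have \<gamma>_cancel: "\<gamma> a * d a0 b = d a b" for a
      using \<beta>(2) by (simp add: \<gamma>_def mult.assoc mult.commute[of \<beta>])
    have "card (\<phi> ` (A - {a0})) \<le> card B"
    proof (rule insert.IH)
      show "finite (\<phi> ` (A - {a0}))" using insert.prems(1) by simp
      show "indep_mod K J (\<phi> ` (A - {a0}))"
        unfolding \<phi>_def by (rule indep_mod_shear(2)[OF K J one insert.prems(2) a0(1) \<gamma>K])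
    next
      fix a' assume "a' \<in> \<phi> ` (A - {a0})"
      then obtain a where a: "a \<in> A" "a' = \<phi> a" by blast
      have "a' - (\<Sum>b'\<in>B. (d a b' - \<gamma> a * d a0 b') * b') \<in> J"
        unfolding a(2) \<phi>_def
        by (rule congruence_eliminate_coordinate[OF J conjunct2[OF d[OF a(1)]]
              conjunct2[OF d[OF a0(1)]] \<gamma>_cancel])
      moreover have "\<forall>b'\<in>B. d a b' - \<gamma> a * d a0 b' \<in> K"
        using d[OF a(1)] d[OF a0(1)] \<gamma>K[OF a(1)]
        by (simp add: coefficient_field_diff[OF K] coefficient_field_mult[OF K])
      ultimately show "\<exists>e. (\<forall>b'\<in>B. e b' \<in> K) \<and> a' - (\<Sum>b'\<in>B. e b' * b') \<in> J"
        by (intro exI[of _ "\<lambda>b'. d a b' - \<gamma> a * d a0 b'"]) simp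
    qed
    moreover have "card (\<phi> ` (A - {a0})) = card A - 1"
      using indep_mod_shear(1)[OF K J one insert.prems(2) a0(1) \<gamma>K] insert.prems(1) a0(1)
      by (simp add: \<phi>_def card_image)
    moreover have "card A \<ge> 1"
      using a0(1) insert.prems(1) by (metis One_nat_def Suc_leI card_gt_0_iff empty_iff)
    ultimately show ?thesis using insert.hyps by simp
  qed
qed

lemma kdim_eq_card:
  fixes K J :: "'a::comm_ring_1 set"
  assumes K: "coefficient_field N K" and J: "is_ideal J" and one: "(1::'a) \<noteq> 0"
    and A: "finite A" "spans_mod K J A" "indep_mod K J A"
  shows "kdim K J = card A"
  unfolding kdim_def
proof (rule Least_equality)
  show "\<exists>B. finite B \<and> card B = card A \<and> spans_mod K J B"
    using A by blast
next
  fix m assume "\<exists>B. finite B \<and> card B = m \<and> spans_mod K J B"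
  then obtain B where B: "finite B" "card B = m" "spans_mod K J B" by blast
  show "card A \<le> m"
    using indep_mod_card_le_spanning[OF K J one B(1) A(1) A(3)]
      in_span_mod_finite_coords[OF K B(1)] B(2,3)
    by (simp add: spans_mod_iff_in_span_mod)
qed

lemma local_ring_max_nontrivial:
  fixes N :: "'a::comm_ring_1 set"
  shows "local_ring_max N \<Longrightarrow> (1::'a) \<noteq> 0"
proof
  assume N: "local_ring_max N" and "(1::'a) = 0"
  then have "a = 0" for a :: 'a
    by (metis mult_1 mult_zero_left)
  moreover have "0 \<in> N"
    using N by (simp add: local_ring_max_def is_ideal_zero)
  ultimately have "N = UNIV"
    by (metis UNIV_eq_I)
  then show False
    using N by (simp add: local_ring_max_def)
qed

lemma ord_ge_1: "a \<in> N \<Longrightarrow> 1 \<le> ord N a"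
  using enat_le_ord_iff[of 1 N a] subset_ideal_pow_1[of N] by (auto simp: one_enat_def)

lemma family_basis_mod_coords_unique:
  fixes K I :: "'a::comm_ring_1 set"
  assumes K: "coefficient_field N K" and I: "is_ideal I" and basis: "family_basis_mod K I l f"
    and c: "\<forall>i<l. c i \<in> K" "y - (\<Sum>i<l. c i * f i) \<in> I"
    and c': "\<forall>i<l. c' i \<in> K" "y - (\<Sum>i<l. c' i * f i) \<in> I"
  shows "\<forall>i<l. c i = c' i"
proof -
  have indep: "\<forall>i<l. e i = 0" if "\<forall>i<l. e i \<in> K" "(\<Sum>i<l. e i * f i) \<in> I" for e
    using basis that unfolding family_basis_mod_def by blast
  have "(\<Sum>i<l. (c i - c' i) * f i) = (y - (\<Sum>i<l. c' i * f i)) - (y - (\<Sum>i<l. c i * f i))"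
    by (simp add: algebra_simps sum_subtractf)
  then have "(\<Sum>i<l. (c i - c' i) * f i) \<in> I"
    using is_ideal_diff[OF I c'(2) c(2)] by simp
  moreover have "\<forall>i<l. c i - c' i \<in> K"
    using c(1) c'(1) by (simp add: coefficient_field_diff[OF K])
  ultimately have "\<forall>i<l. c i - c' i = 0"
    using indep[of "\<lambda>i. c i - c' i"] by blast
  then show ?thesis by simp
qed

text \<open>The lifting sends y to the unique k-combination of the f_i congruent to y.\<close>

lemma family_basis_mod_lifting:
  fixes K I :: "'a::comm_ring_1 set"
  assumes K: "coefficient_field N K" and I: "is_ideal I" and basis: "family_basis_mod K I l f"
  obtains \<sigma> where "lifting I \<sigma>" and "\<And>y. \<exists>c. (\<forall>i<l. c i \<in> K) \<and> \<sigma> y = (\<Sum>i<l. c i * f i)"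
proof -
  define co where "co y = (SOME c. (\<forall>i<l. c i \<in> K) \<and> y - (\<Sum>i<l. c i * f i) \<in> I)" for y
  have co: "(\<forall>i<l. co y i \<in> K) \<and> y - (\<Sum>i<l. co y i * f i) \<in> I" for y
    unfolding co_def
    by (rule someI_ex[where P = "\<lambda>c. (\<forall>i<l. c i \<in> K) \<and> y - (\<Sum>i<l. c i * f i) \<in> I"])
      (use basis in \<open>simp add: family_basis_mod_def\<close>)
  note co_unique = family_basis_mod_coords_unique[OF K I basis conjunct1[OF co] conjunct2[OF co]]
  define \<sigma> where "\<sigma> y = (\<Sum>i<l. co y i * f i)" for y
  have "lifting I \<sigma>"
    unfolding lifting_def
  proof (intro conjI allI impI)
    fix a b assume "a - b \<in> I"
    have "b - (\<Sum>i<l. co a i * f i) = (a - (\<Sum>i<l. co a i * f i)) - (a - b)"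
      by simp
    then have "b - (\<Sum>i<l. co a i * f i) \<in> I"
      using is_ideal_diff[OF I conjunct2[OF co[of a]] \<open>a - b \<in> I\<close>] by simp
    then show "\<sigma> a = \<sigma> b"
      using co_unique[where y = b and c' = "co a"] co[of a] by (simp add: \<sigma>_def)
  next
    fix a
    show "\<sigma> a - a \<in> I"
      using is_ideal_uminus[OF I conjunct2[OF co[of a]]] by (simp add: \<sigma>_def)
  next
    show "\<sigma> 0 = 0"
      using co_unique[where y = 0 and c' = "\<lambda>_. 0"] coefficient_field_zero[OF K] is_ideal_zero[OF I]
      by (simp add: \<sigma>_def)
  qed
  moreover have "\<exists>c. (\<forall>i<l. c i \<in> K) \<and> \<sigma> y = (\<Sum>i<l. c i * f i)" for y
    using co[of y] by (auto simp: \<sigma>_def)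
  ultimately show ?thesis using that by blast
qed

lemma expandableD:
  "expandable N I r x \<Gamma> \<Longrightarrow> lifting I \<sigma> \<Longrightarrow>
    \<exists>g. (\<forall>u\<in>\<Gamma>. g u \<in> range \<sigma>) \<and> adic_sums N r x \<Gamma> g s"
  unfolding expandable_def by blast

lemma adic_sums_truncate:
  "adic_sums N r x \<Gamma> g s \<Longrightarrow>
    \<exists>F. finite F \<and> F \<subseteq> \<Gamma> \<and> s - (\<Sum>u\<in>F. g u * mono_eval r x u) \<in> ideal_pow N t"
  unfolding adic_sums_def by blast

lemma expandable_truncation:
  fixes K I N :: "'a::comm_ring_1 set"
  assumes K: "coefficient_field N K" and I: "is_ideal I"
    and expandable: "expandable N I r x \<Gamma>" and basis: "family_basis_mod K I l f"
  obtains F c where "finite F" "F \<subseteq> \<Gamma>" "\<And>u i. u \<in> F \<Longrightarrow> i < l \<Longrightarrow> c u i \<in> K"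
    "s - (\<Sum>u\<in>F. \<Sum>i<l. c u i * (f i * mono_eval r x u)) \<in> ideal_pow N t"
proof -
  obtain \<sigma> where \<sigma>: "lifting I \<sigma>" "\<And>y. \<exists>c. (\<forall>i<l. c i \<in> K) \<and> \<sigma> y = (\<Sum>i<l. c i * f i)"
    using family_basis_mod_lifting[OF K I basis] by blast
  obtain g where g: "\<forall>u\<in>\<Gamma>. g u \<in> range \<sigma>" "adic_sums N r x \<Gamma> g s"
    using expandableD[OF expandable \<sigma>(1)] by blast
  obtain F where F: "finite F" "F \<subseteq> \<Gamma>" "s - (\<Sum>u\<in>F. g u * mono_eval r x u) \<in> ideal_pow N t"
    using adic_sums_truncate[OF g(2)] by blast
  have "\<forall>u\<in>\<Gamma>. \<exists>c. (\<forall>i<l. c i \<in> K) \<and> g u = (\<Sum>i<l. c i * f i)"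
  proof
    fix u assume "u \<in> \<Gamma>"
    then obtain y where "g u = \<sigma> y" using g(1) by blast
    then show "\<exists>c. (\<forall>i<l. c i \<in> K) \<and> g u = (\<Sum>i<l. c i * f i)"
      using \<sigma>(2)[of y] by simp
  qed
  then obtain c where c: "\<forall>u\<in>\<Gamma>. (\<forall>i<l. c u i \<in> K) \<and> g u = (\<Sum>i<l. c u i * f i)"
    by (elim bchoice[THEN exE])
  have eq: "(\<Sum>u\<in>F. g u * mono_eval r x u) = (\<Sum>u\<in>F. \<Sum>i<l. c u i * (f i * mono_eval r x u))"
  proof (rule sum.cong[OF refl])
    fix u assume "u \<in> F"
    then have "g u = (\<Sum>i<l. c u i * f i)" using F(2) c by blast
    then show "g u * mono_eval r x u = (\<Sum>i<l. c u i * (f i * mono_eval r x u))"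
      by (simp add: sum_distrib_right mult.assoc)
  qed
  have cK: "c u i \<in> K" if "u \<in> F" "i < l" for u i
    using that F(2) c by blast
  show ?thesis
    by (rule that[OF F(1,2) cK]) (use F(3) eq in simp_all)
qed

lemma spans_mod_A1:
  fixes K I N :: "'a::comm_ring_1 set"
  assumes K: "coefficient_field N K" and I: "is_ideal I"
    and expandable: "expandable N I r x \<Gamma>" and basis: "family_basis_mod K I l f"
  shows "spans_mod K (ideal_pow N t) (A1 N r x \<Gamma> l f t)"
  unfolding spans_mod_iff_in_span_mod
proof
  fix s
  obtain F c where F: "finite F" "F \<subseteq> \<Gamma>" and c: "\<And>u i. u \<in> F \<Longrightarrow> i < l \<Longrightarrow> c u i \<in> K"
    and s: "s - (\<Sum>u\<in>F. \<Sum>i<l. c u i * (f i * mono_eval r x u)) \<in> ideal_pow N t"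
    using expandable_truncation[OF K I expandable basis] by blast
  define P where "P p = f (snd p) * mono_eval r x (fst p)" for p
  have "s - (\<Sum>p\<in>F \<times> {..<l}. c (fst p) (snd p) * P p) \<in> ideal_pow N t"
    using s by (simp add: P_def sum.cartesian_product case_prod_beta)
  then show "in_span_mod K (ideal_pow N t) (A1 N r x \<Gamma> l f t) s"
  proof (rule in_span_mod_discard_ideal_terms[OF is_ideal_ideal_pow K, rotated 3])
    show "finite (F \<times> {..<l})" using F(1) by simp
    show "c (fst p) (snd p) \<in> K" if "p \<in> F \<times> {..<l}" for p
      using that c by auto
    show "P p \<in> A1 N r x \<Gamma> l f t \<or> P p \<in> ideal_pow N t" if p: "p \<in> F \<times> {..<l}" for p
    proof (cases "P p \<in> ideal_pow N t")
      case False
      obtain u i where "p = (u, i)" "u \<in> \<Gamma>" "i < l"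
        using p F(2) by blast
      with False show ?thesis
        unfolding A1_def P_def by auto
    qed simp
  qed
qed

lemma A1_subset_A2: "A1 N r x \<Gamma> l f t \<subseteq> A2 N r x \<Gamma> l f t"
proof
  fix z assume "z \<in> A1 N r x \<Gamma> l f t"
  then obtain i u where iu: "z = f i * mono_eval r x u" "i < l" "u \<in> \<Gamma>" "z \<notin> ideal_pow N t"
    unfolding A1_def by blast
  have "ord N (f i) + (\<Sum>j<r. ord N (x j) * enat (u j)) \<le> ord N (f i) + ord N (mono_eval r x u)"
    by (rule add_left_mono[OF ord_mono_eval_ge])
  also have "\<dots> \<le> ord N z"
    unfolding iu(1) by (rule ord_mult_ge)
  finally have "ord N (f i) + (\<Sum>j<r. ord N (x j) * enat (u j)) < enat t"
    using iu(4) enat_le_ord_iff[of t N z] by (meson not_le order_trans)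
  then show "z \<in> A2 N r x \<Gamma> l f t"
    unfolding A2_def using iu by blast
qed

lemma finite_A2:
  assumes \<Gamma>: "\<Gamma> \<subseteq> monomials r" and x: "\<And>j. j < r \<Longrightarrow> x j \<in> N"
  shows "finite (A2 N r x \<Gamma> l f t)"
proof -
  define W where "W = {w::nat \<Rightarrow> nat. \<forall>j. (j < r \<longrightarrow> w j < t) \<and> (r \<le> j \<longrightarrow> w j = 0)}"
  have "finite W"
    unfolding W_def using finite_set_of_finite_funs[of "{..<r}" "{..<t}" 0] by (simp add: not_less)
  moreover have "A2 N r x \<Gamma> l f t \<subseteq> (\<lambda>(i, w). f i * mono_eval r x w) ` ({..<l} \<times> W)"
  proof
    fix z assume "z \<in> A2 N r x \<Gamma> l f t"
    then obtain i u where iu: "z = f i * mono_eval r x u" "i < l" "u \<in> \<Gamma>"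
      "ord N (f i) + (\<Sum>j<r. ord N (x j) * enat (u j)) < enat t"
      unfolding A2_def by blast
    have "enat (u j) < enat t" if "j < r" for j
    proof -
      have "enat (u j) \<le> ord N (x j) * enat (u j)"
        using ord_ge_1[OF x[OF that]] mult_right_mono[of 1 "ord N (x j)" "enat (u j)"] by simp
      also have "\<dots> \<le> (\<Sum>j<r. ord N (x j) * enat (u j))"
        by (rule member_le_sum) (use that in auto)
      also have "\<dots> \<le> ord N (f i) + (\<Sum>j<r. ord N (x j) * enat (u j))"
        by (rule add_increasing) auto
      also have "\<dots> < enat t"
        by (rule iu(4))
      finally show ?thesis .
    qed
    moreover have "u j = 0" if "r \<le> j" for j
      using that iu(3) \<Gamma> by (auto simp: monomials_def)
    ultimately have "u \<in> W" by (simp add: W_def)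
    then show "z \<in> (\<lambda>(i, w). f i * mono_eval r x w) ` ({..<l} \<times> W)"
      using iu by force
  qed
  ultimately show ?thesis
    by (meson finite_SigmaI finite_imageI finite_lessThan finite_subset)
qed

theorem corollary4p2:
  fixes N K I :: "'a::comm_ring_1 set"
    and r l t :: nat
    and x f :: "nat \<Rightarrow> 'a"
    and \<Gamma> :: "(nat \<Rightarrow> nat) set"
  assumes "complete_noetherian_local N"
    and "coefficient_field N K"
    and "standard_set r \<Gamma>"
    and "primary_to N I"
    and "I = gen_ideal {x j | j. j < r}"
    and "expandable N I r x \<Gamma>"
    and "family_basis_mod K I l f"
    and "t > 0"
  shows "spans_mod K (ideal_pow N t) (A1 N r x \<Gamma> l f t)
       \<and> A1 N r x \<Gamma> l f t \<subseteq> A2 N r x \<Gamma> l f t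
       \<and> spans_mod K (ideal_pow N t) (A2 N r x \<Gamma> l f t)
       \<and> (indep_mod K (ideal_pow N t) (A2 N r x \<Gamma> l f t) \<longrightarrow>
            finite (A2 N r x \<Gamma> l f t)
          \<and> spans_mod K (ideal_pow N t) (A2 N r x \<Gamma> l f t)
          \<and> kdim K (ideal_pow N t) = card (A2 N r x \<Gamma> l f t))"
proof -
  have one: "(1::'a) \<noteq> 0"
    using assms(1) local_ring_max_nontrivial by (auto simp: complete_noetherian_local_def)
  have I: "is_ideal I"
    using assms(4) by (simp add: primary_to_def primary_ideal_def)
  have x: "x j \<in> N" if "j < r" for j
    using that primary_to_subset[OF assms(4)] gen_ideal_base[of "x j" "{x j |j. j < r}"] assms(5)
    by blast
  have span1: "spans_mod K (ideal_pow N t) (A1 N r x \<Gamma> l f t)"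
    by (rule spans_mod_A1[OF assms(2) I assms(6,7)])
  have span2: "spans_mod K (ideal_pow N t) (A2 N r x \<Gamma> l f t)"
    using spans_mod_mono[OF span1 A1_subset_A2] .
  have fin: "finite (A2 N r x \<Gamma> l f t)"
    by (rule finite_A2) (use assms(3) x in \<open>auto simp: standard_set_def\<close>)
  have "kdim K (ideal_pow N t) = card (A2 N r x \<Gamma> l f t)"
    if "indep_mod K (ideal_pow N t) (A2 N r x \<Gamma> l f t)"
    by (rule kdim_eq_card[OF assms(2) is_ideal_ideal_pow one fin span2 that])
  then show ?thesis
    using span1 A1_subset_A2 span2 fin by simp
qed

end
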